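(* Let $G$ be a finite undirected graph, $\tau\ge1$ an integer, and $e=(u,v)\in E(G)$. Then for every $w\in\Delta_{\lfloor\tau/2\rfloor}(e,G)$ we have $\phi_\tau(e,G)\ge|V(\Omega(w))|$; i.e. $\phi_\tau(e,G)\ge\max\{|V(\Omega(w))| : w\in\Delta_{\lfloor\tau/2\rfloor}(e,G)\}$.
   Context: Graphs are finite, simple, undirected and unweighted; paths may repeat vertices and their length is the number of edges. For vertices $v,u$ of a graph $H$, $u$ is $t$-hop reachable from $v$ in $H$ (written $u\rightarrow_t v$) if there is a path between them in $H$ of length at most $t$. $N_t(v,H)$ is the set of vertices $u\ne v$ that are $t$-hop reachable from $v$ in $H$. For an edge $e=(u,v)$ of $H$, $\Delta_t(e,H)=N_t(u,H)\cap N_t(v,H)$ and $\mathrm{sup}_t(e,H)=|\Delta_t(e,H)|$. The $(k,\tau)$-truss of $G$ is the maximal subgraph $G'$ of $G$ such that $\mathrm{sup}_\tau(e,G')\ge k-2$ for every $e\in E(G')$ (supports computed inside $G'$) and no more edges of $G$ can be added while keeping this property. The higher-order truss number $\phi_\tau(e,G)$ is the maximum $k$ such that $e$ belongs to the $(k,\tau)$-truss of $G$. For a vertex $w$, $\Omega(w)$ is the subgraph of $G$ induced by $\{w\}\cup\{x : x\rightarrow_{\lfloor\tau/2\rfloor} w \text{ in } G\}$. *)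

theory Defs
  imports Main
begin

definition simple_graph :: "'a set \<Rightarrow> 'a set set \<Rightarrow> bool" where
  "simple_graph V E \<longleftrightarrow> finite V \<and> (\<forall>e\<in>E. e \<subseteq> V \<and> card e = 2)"

fun is_walk :: "'a set set \<Rightarrow> 'a list \<Rightarrow> bool" where
  "is_walk F [] = False"
| "is_walk F [x] = True"
| "is_walk F (x # y # xs) = ({x, y} \<in> F \<and> is_walk F (y # xs))"

definition hop_reach :: "'a set set \<Rightarrow> nat \<Rightarrow> 'a \<Rightarrow> 'a \<Rightarrow> bool" where
  "hop_reach F t v u \<longleftrightarrow>
     (\<exists>xs. is_walk F xs \<and> hd xs = v \<and> last xs = u \<and> length xs - 1 \<le> t)"

definition Nhop :: "'a set set \<Rightarrow> nat \<Rightarrow> 'a \<Rightarrow> 'a set" where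
  "Nhop F t v = {u. u \<noteq> v \<and> hop_reach F t v u}"

definition Delta :: "'a set set \<Rightarrow> nat \<Rightarrow> 'a \<Rightarrow> 'a \<Rightarrow> 'a set" where
  "Delta F t u v = Nhop F t u \<inter> Nhop F t v"

definition sup_t :: "'a set set \<Rightarrow> nat \<Rightarrow> 'a \<Rightarrow> 'a \<Rightarrow> nat" where
  "sup_t F t u v = card (Delta F t u v)"

text \<open>Isolated vertices do not affect reachability, so a
  subgraph is determined (for this purpose) by its edge set.\<close>
definition truss_valid :: "'a set set \<Rightarrow> nat \<Rightarrow> nat \<Rightarrow> 'a set set \<Rightarrow> bool" where
  "truss_valid E k \<tau> F \<longleftrightarrow> F \<subseteq> E \<and>
     (\<forall>x y. {x, y} \<in> F \<longrightarrow> x \<noteq> y \<longrightarrow> int (sup_t F \<tau> x y) \<ge> int k - 2)"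

definition truss :: "'a set set \<Rightarrow> nat \<Rightarrow> nat \<Rightarrow> 'a set set" where
  "truss E k \<tau> = \<Union>{F. truss_valid E k \<tau> F}"

definition truss_number :: "'a set set \<Rightarrow> nat \<Rightarrow> 'a \<Rightarrow> 'a \<Rightarrow> nat" where
  "truss_number E \<tau> u v = (GREATEST k. {u, v} \<in> truss E k \<tau>)"

definition Omega_verts :: "'a set set \<Rightarrow> nat \<Rightarrow> 'a \<Rightarrow> 'a set" where
  "Omega_verts E \<tau> w = {w} \<union> {x. hop_reach E (\<tau> div 2) w x}"

end

theory Submission
  imports Defs
begin

text \<open>Every vertex of \<open>\<Omega>(w)\<close> is \<open>\<lfloor>\<tau>/2\<rfloor>\<close>-hop reachable from \<open>w\<close> already inside
  \<open>\<Omega>(w)\<close>: every vertex on a walk of length at most \<open>\<lfloor>\<tau>/2\<rfloor>\<close> from \<open>w\<close> is itself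
  within that distance of \<open>w\<close>.
  Hence any two vertices of \<open>\<Omega>(w)\<close> are \<open>\<tau>\<close>-hop reachable from each other through \<open>w\<close>,
  so every edge of \<open>\<Omega>(w)\<close> has all other vertices of \<open>\<Omega>(w)\<close> in its \<open>\<tau>\<close>-support:
  \<open>\<Omega>(w)\<close> is contained in the \<open>(|V(\<Omega>(w))|,\<tau>)\<close>-truss.  If \<open>w \<in> \<Delta>\<^bsub>\<lfloor>\<tau>/2\<rfloor>\<^esub>(e)\<close>
  then both ends of \<open>e\<close> lie in \<open>\<Omega>(w)\<close>, so \<open>e\<close> belongs to that truss.\<close>

definition hop_ball :: "'a set set \<Rightarrow> nat \<Rightarrow> 'a \<Rightarrow> 'a set" where
  "hop_ball F r w = {x. hop_reach F r w x}"

definition induced_edges :: "'a set set \<Rightarrow> 'a set \<Rightarrow> 'a set set" where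
  "induced_edges E S = {e \<in> E. e \<subseteq> S}"

lemma is_walk_nonempty: "is_walk F xs \<Longrightarrow> xs \<noteq> []"
  by (cases xs) auto

lemma is_walk_append:
  "is_walk F xs \<Longrightarrow> is_walk F ys \<Longrightarrow> last xs = hd ys \<Longrightarrow> is_walk F (xs @ tl ys)"
proof (induction F xs rule: is_walk.induct)
  case (2 F x)
  then show ?case by (cases ys) auto
qed auto

lemma is_walk_prefix: "is_walk F (xs @ ys) \<Longrightarrow> xs \<noteq> [] \<Longrightarrow> is_walk F xs"
  by (induction F xs rule: is_walk.induct) auto

lemma is_walk_snoc: "is_walk F xs \<Longrightarrow> {last xs, y} \<in> F \<Longrightarrow> is_walk F (xs @ [y])"
  by (induction F xs rule: is_walk.induct) auto

lemma is_walk_rev: "is_walk F xs \<Longrightarrow> is_walk F (rev xs)"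
proof (induction F xs rule: is_walk.induct)
  case (3 F x y xs)
  then have "{last (rev (y # xs)), x} \<in> F" by (simp add: insert_commute)
  with 3 show ?case using is_walk_snoc[of F "rev (y # xs)" x] by simp
qed auto

lemma is_walk_tl_subset: "is_walk F xs \<Longrightarrow> set (tl xs) \<subseteq> \<Union>F"
  by (induction F xs rule: is_walk.induct) auto

lemma is_walk_induced_edges:
  "is_walk E xs \<Longrightarrow> set xs \<subseteq> S \<Longrightarrow> is_walk (induced_edges E S) xs"
  unfolding induced_edges_def by (induction E xs rule: is_walk.induct) auto

lemma hop_reach_refl: "hop_reach F t v v"
  unfolding hop_reach_def by (rule exI[of _ "[v]"]) auto

lemma hop_reach_sym: "hop_reach F t v u \<Longrightarrow> hop_reach F t u v"
  unfolding hop_reach_def by (metis is_walk_rev is_walk_nonempty hd_rev last_rev length_rev)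

lemma hop_reach_mono: "hop_reach F a x y \<Longrightarrow> a \<le> b \<Longrightarrow> hop_reach F b x y"
  unfolding hop_reach_def by fastforce

lemma hop_reach_trans:
  assumes "hop_reach F a x y" and "hop_reach F b y z"
  shows "hop_reach F (a + b) x z"
proof -
  obtain xs where xs: "is_walk F xs" "hd xs = x" "last xs = y" "length xs - 1 \<le> a"
    using assms(1) unfolding hop_reach_def by blast
  obtain ys where ys: "is_walk F ys" "hd ys = y" "last ys = z" "length ys - 1 \<le> b"
    using assms(2) unfolding hop_reach_def by blast
  have "xs \<noteq> []" "ys \<noteq> []"
    using xs(1) ys(1) by (auto dest: is_walk_nonempty)
  with xs ys have "is_walk F (xs @ tl ys)" "hd (xs @ tl ys) = x"
    "last (xs @ tl ys) = z" "length (xs @ tl ys) - 1 \<le> a + b"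
    by (auto simp: is_walk_append last_append neq_Nil_conv)
  then show ?thesis unfolding hop_reach_def by blast
qed

lemma hop_reach_in_Union: "hop_reach F t v u \<Longrightarrow> u \<noteq> v \<Longrightarrow> u \<in> \<Union>F"
  unfolding hop_reach_def
  by (metis is_walk_nonempty is_walk_tl_subset last_ConsL last_in_set last_tl list.collapse
      subsetD)

lemma hop_reach_walk_vertex:
  assumes "is_walk F xs" and "z \<in> set xs"
  shows "hop_reach F (length xs - 1) (hd xs) z"
proof -
  obtain as bs where xs: "xs = as @ z # bs"
    using assms(2) by (meson split_list)
  then have "is_walk F (as @ [z])"
    using assms(1) is_walk_prefix[of F "as @ [z]" bs] by simp
  moreover have "hd (as @ [z]) = hd xs" "length (as @ [z]) - 1 \<le> length xs - 1"
    using xs by (cases as; simp)+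
  ultimately show ?thesis unfolding hop_reach_def by fastforce
qed

lemma Delta_subset_Union: "Delta F t x y \<subseteq> \<Union>F"
  unfolding Delta_def Nhop_def by (auto dest: hop_reach_in_Union)

lemma Omega_verts_eq_hop_ball: "Omega_verts E \<tau> w = hop_ball E (\<tau> div 2) w"
  unfolding Omega_verts_def hop_ball_def by (auto intro: hop_reach_refl)

lemma finite_hop_ball: "finite (\<Union>F) \<Longrightarrow> finite (hop_ball F r w)"
  unfolding hop_ball_def
  by (rule finite_subset[of _ "insert w (\<Union>F)"]) (auto dest: hop_reach_in_Union)

lemma hop_reach_induced_hop_ball:
  assumes "x \<in> hop_ball E r w"
  shows "hop_reach (induced_edges E (hop_ball E r w)) r w x"
proof -
  obtain xs where xs: "is_walk E xs" "hd xs = w" "last xs = x" "length xs - 1 \<le> r"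
    using assms unfolding hop_ball_def mem_Collect_eq hop_reach_def by blast
  have "set xs \<subseteq> hop_ball E r w"
  proof
    fix z assume "z \<in> set xs"
    with xs(1) have "hop_reach E (length xs - 1) w z"
      unfolding xs(2)[symmetric] by (rule hop_reach_walk_vertex)
    with xs(4) show "z \<in> hop_ball E r w"
      unfolding hop_ball_def by (simp add: hop_reach_mono)
  qed
  then have "is_walk (induced_edges E (hop_ball E r w)) xs"
    by (rule is_walk_induced_edges[OF xs(1)])
  with xs(2-4) show ?thesis unfolding hop_reach_def by blast
qed

lemma hop_reach_induced_hop_ball_pair:
  assumes "x \<in> hop_ball E r w" and "z \<in> hop_ball E r w" and "2 * r \<le> t"
  shows "hop_reach (induced_edges E (hop_ball E r w)) t x z"
  using hop_reach_trans[OF hop_reach_sym[OF hop_reach_induced_hop_ball[OF assms(1)]]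
      hop_reach_induced_hop_ball[OF assms(2)]] assms(3)
  by (auto elim: hop_reach_mono)

lemma truss_valid_if_hop_diameter:
  assumes "finite S" and "F \<subseteq> E" and "\<forall>e\<in>F. e \<subseteq> S"
    and "\<And>x z. x \<in> S \<Longrightarrow> z \<in> S \<Longrightarrow> hop_reach F \<tau> x z"
  shows "truss_valid E (card S) \<tau> F"
  unfolding truss_valid_def
proof (intro conjI assms(2) allI impI)
  fix x y assume xy: "{x, y} \<in> F" "x \<noteq> y"
  then have "x \<in> S" "y \<in> S" using assms(3) by auto
  then have "S - {x, y} \<subseteq> Delta F \<tau> x y"
    using assms(4) by (auto simp: Delta_def Nhop_def)
  moreover have "\<Union>F \<subseteq> S" using assms(3) by blast
  then have "finite (Delta F \<tau> x y)"
    using Delta_subset_Union assms(1) by (meson finite_subset)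
  ultimately have "card (S - {x, y}) \<le> sup_t F \<tau> x y"
    unfolding sup_t_def by (rule card_mono[rotated])
  moreover have "card S - 2 \<le> card (S - {x, y})"
    using diff_card_le_card_Diff[of "{x, y}" S] xy(2) by simp
  ultimately show "int (sup_t F \<tau> x y) \<ge> int (card S) - 2" by linarith
qed

lemma simple_graph_Union_subset: "simple_graph V E \<Longrightarrow> \<Union>E \<subseteq> V"
  unfolding simple_graph_def by blast

text \<open>Without this bound, \<open>GREATEST\<close> in \<open>truss_number\<close> would be a junk value.\<close>

lemma truss_le_card_plus_2:
  assumes "simple_graph V E" and "{u, v} \<in> truss E k \<tau>"
  shows "k \<le> card V + 2"
proof -
  obtain F where F: "truss_valid E k \<tau> F" "{u, v} \<in> F"
    using assms(2) unfolding truss_def by blast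
  then have "F \<subseteq> E" unfolding truss_valid_def by blast
  have "card {u, v} = 2"
    using assms(1) F(2) \<open>F \<subseteq> E\<close> unfolding simple_graph_def by blast
  then have "u \<noteq> v" by (cases "u = v") auto
  with F have "int (sup_t F \<tau> u v) \<ge> int k - 2" unfolding truss_valid_def by blast
  moreover have "\<Union>F \<subseteq> V"
    using \<open>F \<subseteq> E\<close> simple_graph_Union_subset[OF assms(1)] by blast
  then have "Delta F \<tau> u v \<subseteq> V"
    using Delta_subset_Union[of F \<tau> u v] by (rule order_trans[rotated])
  then have "sup_t F \<tau> u v \<le> card V"
    unfolding sup_t_def using assms(1) by (simp add: card_mono simple_graph_def)
  ultimately show ?thesis by linarith
qed

lemma truss_number_ge:
  assumes "simple_graph V E" and "{u, v} \<in> truss E k \<tau>"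
  shows "k \<le> truss_number E \<tau> u v"
  unfolding truss_number_def
  using Greatest_le_nat[of "\<lambda>k. {u, v} \<in> truss E k \<tau>" k "card V + 2"] assms
    truss_le_card_plus_2[OF assms(1)] by blast

theorem lemma5:
  fixes V :: "'a set" and E :: "'a set set" and \<tau> :: nat and u v w :: 'a
  assumes "simple_graph V E"
    and "\<tau> \<ge> 1"
    and "{u, v} \<in> E"
    and "w \<in> Delta E (\<tau> div 2) u v"
  shows "truss_number E \<tau> u v \<ge> card (Omega_verts E \<tau> w)"
proof -
  define B where "B = hop_ball E (\<tau> div 2) w"
  have "finite (\<Union>E)"
    using finite_subset[OF simple_graph_Union_subset[OF assms(1)]] assms(1)
    by (simp add: simple_graph_def)
  then have "finite B" unfolding B_def by (rule finite_hop_ball)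
  moreover have diameter: "hop_reach (induced_edges E B) \<tau> x z" if "x \<in> B" "z \<in> B" for x z
    using that unfolding B_def by (rule hop_reach_induced_hop_ball_pair) simp
  ultimately have "truss_valid E (card B) \<tau> (induced_edges E B)"
    by (intro truss_valid_if_hop_diameter diameter) (auto simp: induced_edges_def)
  moreover have "hop_reach E (\<tau> div 2) w u" "hop_reach E (\<tau> div 2) w v"
    using assms(4) by (auto simp: Delta_def Nhop_def intro: hop_reach_sym)
  then have "{u, v} \<in> induced_edges E B"
    using assms(3) by (simp add: induced_edges_def B_def hop_ball_def)
  ultimately have "{u, v} \<in> truss E (card B) \<tau>"
    unfolding truss_def by blast
  then show ?thesis
    unfolding Omega_verts_eq_hop_ball B_def[symmetric] by (rule truss_number_ge[OF assms(1)])
qed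

end
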